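(* Let $\mu$ be a probability measure on $\mathbb{C}$ with compact support, and let $X_1, \ldots, X_n$ be iid random variables with distribution $\mu$. Then for every $\varepsilon > 0$ there exist constants $C, c > 0$ (depending only on $\mu$ and $\varepsilon$) such that, for every $n\ge 1$, with probability at least $1 - C e^{-cn}$ the polynomial $p_n(z) := \prod_{j=1}^n (z - X_j)$ has no critical points outside $N_\mu(\varepsilon)$.
   Context: For a probability measure $\mu$ on $\mathbb{C}$, the Cauchy–Stieltjes transform is $m_\mu(z) := \int_{\mathbb{C}} \frac{d\mu(x)}{z-x}$ for $z \notin \operatorname{supp}(\mu)$. Let $M_\mu := \{ z \in \mathbb{C}\setminus \operatorname{supp}(\mu) : m_\mu(z) = 0\}$, and for $\varepsilon>0$ let $N_\mu(\varepsilon) := \{ z \in \mathbb{C} : \operatorname{dist}(z, \operatorname{supp}(\mu) \cup M_\mu) < \varepsilon\}$, where $\operatorname{dist}(z,D)=\inf_{w\in D}|z-w|$. A critical point of a polynomial is a zero of its derivative. *)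

theory Defs
  imports "HOL-Probability.Probability" "HOL-Computational_Algebra.Polynomial"
begin

definition msupp :: "complex measure \<Rightarrow> complex set" where
  "msupp \<mu> = {x. \<forall>e>0. emeasure \<mu> (ball x e) > 0}"

definition cauchy_transform :: "complex measure \<Rightarrow> complex \<Rightarrow> complex" where
  "cauchy_transform \<mu> z = integral\<^sup>L \<mu> (\<lambda>x. 1 / (z - x))"

definition zeros_CT :: "complex measure \<Rightarrow> complex set" where
  "zeros_CT \<mu> = {z. z \<notin> msupp \<mu> \<and> cauchy_transform \<mu> z = 0}"

definition nbhd_N :: "complex measure \<Rightarrow> real \<Rightarrow> complex set" where
  "nbhd_N \<mu> e = {z. infdist z (msupp \<mu> \<union> zeros_CT \<mu>) < e}"

definition rand_poly :: "nat \<Rightarrow> (nat \<Rightarrow> complex) \<Rightarrow> complex poly" where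
  "rand_poly n x = (\<Prod>j<n. [:- x j, 1:])"

end

theory Submission
  imports Defs
begin

(*
  A critical point z of p_n that is not a root is a zero of the empirical Cauchy transform
  m_n(z) = (1/n) sum_j 1/(z - X_j) = p_n'(z) / (n p_n(z)), and almost surely every X_j lies in
  supp mu. Outside a disc containing supp mu each term z/(z - X_j) has positive real part, so
  m_n has no zeros there. On the compact part K of the disc at distance >= eps from
  supp mu and M_mu, the transform m_mu is continuous and zero-free, hence |m_mu| >= delta > 0,
  and both m_mu and m_n are (1/eps^2)-Lipschitz. Hoeffding's inequality for the real and
  imaginary parts of the bounded kernel 1/(y - x) shows that, outside an event of probability
  O(exp(-c n)), m_n is within delta/4 of m_mu at every point y of a finite delta eps^2/4-net of K;
  the Lipschitz bounds then keep m_n away from 0 on all of K.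
*)

section \<open>The support of a Borel measure on the plane\<close>

lemma msupp_complement:
  assumes "sets \<mu> = sets borel"
  shows "- msupp \<mu> = \<Union>{ball x e | x e. 0 < e \<and> emeasure \<mu> (ball x e) = 0}"
proof (intro equalityI subsetI)
  fix u assume "u \<in> - msupp \<mu>"
  then obtain e where "0 < e" "emeasure \<mu> (ball u e) = 0"
    by (auto simp: msupp_def not_less)
  then show "u \<in> \<Union>{ball x e | x e. 0 < e \<and> emeasure \<mu> (ball x e) = 0}"
    by (intro UnionI[of "ball u e"]) auto
next
  fix u assume "u \<in> \<Union>{ball x e | x e. 0 < e \<and> emeasure \<mu> (ball x e) = 0}"
  then obtain y r where yr: "emeasure \<mu> (ball y r) = 0" "u \<in> ball y r"
    by auto
  have "ball u (r - dist y u) \<subseteq> ball y r"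
  proof
    fix v assume "v \<in> ball u (r - dist y u)"
    then show "v \<in> ball y r"
      using dist_triangle[of y v u] by simp
  qed
  then have "emeasure \<mu> (ball u (r - dist y u)) \<le> emeasure \<mu> (ball y r)"
    by (intro emeasure_mono) (auto simp: assms)
  then have null: "emeasure \<mu> (ball u (r - dist y u)) = 0"
    using yr(1) by simp
  show "u \<in> - msupp \<mu>"
  proof
    assume "u \<in> msupp \<mu>"
    then have "0 < emeasure \<mu> (ball u (r - dist y u))"
      using yr(2) unfolding msupp_def by simp
    with null show False
      by simp
  qed
qed

lemma closed_msupp:
  assumes "sets \<mu> = sets borel"
  shows "closed (msupp \<mu>)"
proof -
  have "open (- msupp \<mu>)"
    unfolding msupp_complement[OF assms] by (rule open_Union) auto
  then show ?thesis
    by (simp add: closed_def)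
qed

lemma msupp_complement_null:
  assumes "sets \<mu> = sets borel"
  shows "- msupp \<mu> \<in> null_sets \<mu>"
proof -
  define F where "F = {ball x e | x e. 0 < e \<and> emeasure \<mu> (ball x e) = 0}"
  obtain F' where F': "F' \<subseteq> F" "countable F'" "\<Union>F' = \<Union>F"
    using Lindelof[of F] unfolding F_def by auto
  have "F' \<subseteq> null_sets \<mu>"
    using F'(1) by (auto simp: F_def null_sets_def assms)
  then have "(\<Union>B\<in>F'. B) \<in> null_sets \<mu>"
    using F'(2) by (intro null_sets_UN') auto
  then show ?thesis
    using F'(3) by (simp add: msupp_complement[OF assms] F_def)
qed

lemma AE_in_msupp:
  assumes "sets \<mu> = sets borel"
  shows "AE x in \<mu>. x \<in> msupp \<mu>"
  using msupp_complement_null[OF assms] by (auto intro!: AE_I')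

lemma msupp_nonempty:
  assumes "prob_space \<mu>" "sets \<mu> = sets borel"
  shows "msupp \<mu> \<noteq> {}"
proof
  assume "msupp \<mu> = {}"
  then have "emeasure \<mu> (space \<mu>) = 0"
    using msupp_complement_null[OF assms(2)] sets_eq_imp_space_eq[OF assms(2)]
    by (auto simp: null_sets_def)
  then show False
    using prob_space.emeasure_space_1[OF assms(1)] by simp
qed

lemma infdist_msupp_Un_zeros_le:
  assumes "prob_space \<mu>" "sets \<mu> = sets borel"
  shows "infdist z (msupp \<mu> \<union> zeros_CT \<mu>) \<le> infdist z (msupp \<mu>)"
  using msupp_nonempty[OF assms] by (intro infdist_mono) auto

section \<open>The Cauchy transform away from the support\<close>

lemma norm_inverse_diff_le_infdist:
  fixes z x :: complex
  assumes "x \<in> S" "0 < e" "e \<le> infdist z S"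
  shows "norm (1 / (z - x)) \<le> 1 / e"
proof -
  have "e \<le> dist z x"
    using assms infdist_le[of x S z] by linarith
  then show ?thesis
    using assms(2) by (simp add: norm_divide dist_norm frac_le)
qed

lemma norm_inverse_diff_sub_le:
  fixes z y x :: complex
  assumes "0 < e" "e \<le> dist z x" "e \<le> dist y x"
  shows "norm (1 / (z - x) - 1 / (y - x)) \<le> dist z y / e\<^sup>2"
proof -
  have "z - x \<noteq> 0" "y - x \<noteq> 0"
    using assms by (auto simp: dist_norm)
  then have "1 / (z - x) - 1 / (y - x) = (y - z) / ((z - x) * (y - x))"
    by (simp add: field_simps)
  then have "norm (1 / (z - x) - 1 / (y - x)) = dist z y / (norm (z - x) * norm (y - x))"
    by (simp add: norm_divide norm_mult dist_norm norm_minus_commute)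
  also have "\<dots> \<le> dist z y / (e * e)"
    using assms by (intro divide_left_mono mult_mono) (auto simp: dist_norm intro!: mult_pos_pos)
  finally show ?thesis
    by (simp add: power2_eq_square)
qed

lemma AE_norm_cauchy_kernel_le:
  assumes "sets \<mu> = sets borel" "0 < e" "e \<le> infdist z (msupp \<mu>)"
  shows "AE x in \<mu>. norm (1 / (z - x)) \<le> 1 / e"
  using AE_in_msupp[OF assms(1)] by eventually_elim (rule norm_inverse_diff_le_infdist[OF _ assms(2,3)])

lemma borel_measurable_cauchy_kernel:
  fixes \<mu> :: "complex measure"
  assumes "sets \<mu> = sets borel"
  shows "(\<lambda>x. 1 / (z - x)) \<in> borel_measurable \<mu>"
  unfolding measurable_cong_sets[OF assms refl] by measurable

lemma integrable_cauchy_kernel: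
  assumes "prob_space \<mu>" "sets \<mu> = sets borel" "0 < e" "e \<le> infdist z (msupp \<mu>)"
  shows "integrable \<mu> (\<lambda>x. 1 / (z - x))"
proof -
  interpret prob_space \<mu> by (rule assms(1))
  show ?thesis
    using AE_norm_cauchy_kernel_le[OF assms(2-4)] borel_measurable_cauchy_kernel[OF assms(2)]
    by (rule integrable_const_bound)
qed

lemma cauchy_transform_lipschitz:
  assumes "prob_space \<mu>" "sets \<mu> = sets borel" "0 < e"
    and "e \<le> infdist z (msupp \<mu>)" "e \<le> infdist y (msupp \<mu>)"
  shows "dist (cauchy_transform \<mu> z) (cauchy_transform \<mu> y) \<le> dist z y / e\<^sup>2"
proof -
  interpret prob_space \<mu> by (rule assms(1))
  have "dist (cauchy_transform \<mu> z) (cauchy_transform \<mu> y)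
      = norm (integral\<^sup>L \<mu> (\<lambda>x. 1 / (z - x) - 1 / (y - x)))"
    using integrable_cauchy_kernel[OF assms(1-4)] integrable_cauchy_kernel[OF assms(1-3,5)]
    by (simp add: cauchy_transform_def dist_norm)
  also have "\<dots> \<le> integral\<^sup>L \<mu> (\<lambda>x. norm (1 / (z - x) - 1 / (y - x)))"
    by (rule integral_norm_bound)
  also have "\<dots> \<le> dist z y / e\<^sup>2"
  proof (rule integral_le_const)
    show "integrable \<mu> (\<lambda>x. norm (1 / (z - x) - 1 / (y - x)))"
      using integrable_cauchy_kernel[OF assms(1-4)] integrable_cauchy_kernel[OF assms(1-3,5)]
      by auto
    show "AE x in \<mu>. norm (1 / (z - x) - 1 / (y - x)) \<le> dist z y / e\<^sup>2"
      using AE_in_msupp[OF assms(2)]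
    proof eventually_elim
      case (elim x)
      then have "e \<le> dist z x" "e \<le> dist y x"
        using assms(4,5) infdist_le[OF elim, of z] infdist_le[OF elim, of y] by linarith+
      then show ?case
        by (rule norm_inverse_diff_sub_le[OF assms(3)])
    qed
  qed
  finally show ?thesis .
qed

lemma cauchy_transform_bounded_below:
  assumes "prob_space \<mu>" "sets \<mu> = sets borel" "compact K" "0 < e"
    and K: "\<And>z. z \<in> K \<Longrightarrow> e \<le> infdist z (msupp \<mu> \<union> zeros_CT \<mu>)"
  obtains \<delta> where "0 < \<delta>" "\<And>z. z \<in> K \<Longrightarrow> \<delta> \<le> norm (cauchy_transform \<mu> z)"
proof -
  have K_supp: "e \<le> infdist z (msupp \<mu>)" if "z \<in> K" for z
    using K[OF that] infdist_msupp_Un_zeros_le[OF assms(1,2)] by (rule order_trans)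
  have K_nonzero: "cauchy_transform \<mu> z \<noteq> 0" if "z \<in> K" for z
  proof
    assume "cauchy_transform \<mu> z = 0"
    with K_supp[OF that] assms(4) have "z \<in> zeros_CT \<mu>"
      by (auto simp: zeros_CT_def)
    then show False
      using K[OF that] assms(4) by simp
  qed
  have "(1 / e\<^sup>2)-lipschitz_on K (cauchy_transform \<mu>)"
    by (intro lipschitz_onI)
       (use cauchy_transform_lipschitz[OF assms(1,2,4) K_supp K_supp] in auto)
  then have cont: "continuous_on K (\<lambda>z. norm (cauchy_transform \<mu> z))"
    by (intro continuous_on_norm lipschitz_on_continuous_on)
  show ?thesis
  proof (cases "K = {}")
    case True
    then show ?thesis using that[of 1] by simp
  next
    case False
    then obtain z0 where "z0 \<in> K" "\<And>z. z \<in> K \<Longrightarrow> norm (cauchy_transform \<mu> z0) \<le> norm (cauchy_transform \<mu> z)"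
      using continuous_attains_inf[OF assms(3) False cont] by blast
    then show ?thesis
      using that[of "norm (cauchy_transform \<mu> z0)"] K_nonzero by auto
  qed
qed

section \<open>Critical points and the empirical Cauchy transform\<close>

definition empirical_cauchy_transform :: "nat \<Rightarrow> (nat \<Rightarrow> complex) \<Rightarrow> complex \<Rightarrow> complex" where
  "empirical_cauchy_transform n x z = (\<Sum>j<n. 1 / (z - x j)) / of_nat n"

lemma poly_pderiv_rand_poly:
  assumes "\<And>j. j < n \<Longrightarrow> z \<noteq> x j"
  shows "poly (pderiv (rand_poly n x)) z = poly (rand_poly n x) z * (\<Sum>j<n. 1 / (z - x j))"
  using assms
proof (induction n)
  case 0
  then show ?case by (simp add: rand_poly_def)
next
  case (Suc n)
  have step: "rand_poly (Suc n) x = rand_poly n x * [:- x n, 1:]"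
    by (simp add: rand_poly_def)
  have deriv: "poly (pderiv (rand_poly (Suc n) x)) z
      = poly (rand_poly n x) z + poly (pderiv (rand_poly n x)) z * (z - x n)"
    unfolding step pderiv_mult by (simp add: pderiv_pCons algebra_simps)
  have val: "poly (rand_poly (Suc n) x) z = poly (rand_poly n x) z * (z - x n)"
    by (simp add: step algebra_simps)
  have IH: "poly (pderiv (rand_poly n x)) z = poly (rand_poly n x) z * (\<Sum>j<n. 1 / (z - x j))"
    using Suc by simp
  have "z - x n \<noteq> 0"
    using Suc.prems by simp
  then show ?case
    unfolding deriv val IH by (simp add: field_simps)
qed

lemma empirical_cauchy_transform_eq_0_if_critical:
  assumes "poly (pderiv (rand_poly n x)) z = 0" "\<And>j. j < n \<Longrightarrow> z \<noteq> x j"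
  shows "empirical_cauchy_transform n x z = 0"
proof -
  have "poly (rand_poly n x) z = (\<Prod>j<n. z - x j)"
    by (simp add: rand_poly_def poly_prod)
  also have "\<dots> \<noteq> 0"
    using assms(2) by auto
  finally show ?thesis
    using assms poly_pderiv_rand_poly[of n z x] by (simp add: empirical_cauchy_transform_def)
qed

lemma Re_divide_diff_pos:
  fixes z x :: complex
  assumes "norm x < norm z"
  shows "0 < Re (z / (z - x))"
proof -
  define w where "w = x / z"
  have "z \<noteq> 0"
    using assms by auto
  then have "norm w < 1" "z / (z - x) = 1 / (1 - w)"
    using assms by (simp_all add: w_def norm_divide field_simps)
  moreover have "Re w < 1"
    using \<open>norm w < 1\<close> abs_Re_le_cmod[of w] by linarith
  ultimately show ?thesis
    by (simp add: Re_divide add_pos_nonneg)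
qed

lemma empirical_cauchy_transform_ne_0_outside:
  assumes "0 < n" "\<And>j. j < n \<Longrightarrow> norm (x j) < norm z"
  shows "empirical_cauchy_transform n x z \<noteq> 0"
proof -
  have "Re (z * (\<Sum>j<n. 1 / (z - x j))) = (\<Sum>j<n. Re (z / (z - x j)))"
    by (simp add: sum_distrib_left Re_sum)
  also have "\<dots> > 0"
    using assms by (intro sum_pos Re_divide_diff_pos) auto
  finally have "(\<Sum>j<n. 1 / (z - x j)) \<noteq> 0"
    by (metis less_irrefl mult_zero_right zero_complex.sel(1))
  then show ?thesis
    using assms(1) by (simp add: empirical_cauchy_transform_def)
qed

lemma dist_empirical_cauchy_transform_le:
  assumes "0 < e" "e \<le> infdist z S" "e \<le> infdist y S" "\<And>j. j < n \<Longrightarrow> x j \<in> S"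
  shows "dist (empirical_cauchy_transform n x z) (empirical_cauchy_transform n x y) \<le> dist z y / e\<^sup>2"
proof (cases "n = 0")
  case False
  have "dist (empirical_cauchy_transform n x z) (empirical_cauchy_transform n x y)
      = norm (\<Sum>j<n. 1 / (z - x j) - 1 / (y - x j)) / real n"
    by (simp add: empirical_cauchy_transform_def dist_norm sum_subtractf norm_divide
        flip: diff_divide_distrib)
  also have "\<dots> \<le> (\<Sum>j<n. dist z y / e\<^sup>2) / real n"
  proof (intro divide_right_mono order.trans[OF norm_sum] sum_mono)
    fix j assume "j \<in> {..<n}"
    then have "e \<le> dist z (x j)" "e \<le> dist y (x j)"
      using assms infdist_le[of "x j" S] by (meson lessThan_iff order_trans)+
    then show "norm (1 / (z - x j) - 1 / (y - x j)) \<le> dist z y / e\<^sup>2"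
      by (rule norm_inverse_diff_sub_le[OF assms(1)])
  qed simp
  also have "\<dots> = dist z y / e\<^sup>2"
    using False by simp
  finally show ?thesis .
qed (simp add: empirical_cauchy_transform_def)

lemma empirical_cauchy_transform_ne_0_near:
  assumes "prob_space \<mu>" "sets \<mu> = sets borel" "0 < e"
    and "e \<le> infdist z (msupp \<mu>)" "e \<le> infdist y (msupp \<mu>)" "\<And>j. j < n \<Longrightarrow> x j \<in> msupp \<mu>"
    and close: "dist (empirical_cauchy_transform n x y) (cauchy_transform \<mu> y) + 2 * dist y z / e\<^sup>2
      < norm (cauchy_transform \<mu> z)"
  shows "empirical_cauchy_transform n x z \<noteq> 0"
proof
  assume "empirical_cauchy_transform n x z = 0"
  then have "norm (cauchy_transform \<mu> z)
      = dist (empirical_cauchy_transform n x z) (cauchy_transform \<mu> z)"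
    by (simp add: dist_norm)
  also have "\<dots> \<le> dist (empirical_cauchy_transform n x z) (empirical_cauchy_transform n x y)
      + dist (empirical_cauchy_transform n x y) (cauchy_transform \<mu> y)
      + dist (cauchy_transform \<mu> y) (cauchy_transform \<mu> z)"
    using dist_triangle[of "empirical_cauchy_transform n x z" "cauchy_transform \<mu> z"
        "empirical_cauchy_transform n x y"]
      dist_triangle[of "empirical_cauchy_transform n x y" "cauchy_transform \<mu> z" "cauchy_transform \<mu> y"]
    by linarith
  also have "\<dots> \<le> dist y z / e\<^sup>2 + dist (empirical_cauchy_transform n x y) (cauchy_transform \<mu> y)
      + dist y z / e\<^sup>2"
    using dist_empirical_cauchy_transform_le[OF assms(3,4,5,6)]
      cauchy_transform_lipschitz[OF assms(1-3,5,4)]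
    by (intro add_mono) (simp_all add: dist_commute)
  finally show False
    using close by simp
qed

section \<open>Concentration of empirical means under the product measure\<close>

lemma indep_vars_PiM_coordinates:
  assumes "prob_space \<mu>" "I \<noteq> {}"
  shows "prob_space.indep_vars (PiM I (\<lambda>_. \<mu>)) (\<lambda>_. \<mu>) (\<lambda>i x. x i) I"
proof -
  interpret P: prob_space "PiM I (\<lambda>_. \<mu>)"
    by (intro prob_space_PiM assms)
  have "distr (PiM I (\<lambda>_. \<mu>)) (PiM I (\<lambda>_. \<mu>)) (\<lambda>x. \<lambda>i\<in>I. x i)
      = distr (PiM I (\<lambda>_. \<mu>)) (PiM I (\<lambda>_. \<mu>)) (\<lambda>x. x)"
    by (intro distr_cong) (auto simp: space_PiM PiE_def extensional_def restrict_def)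
  also have "\<dots> = PiM I (\<lambda>i. distr (PiM I (\<lambda>_. \<mu>)) \<mu> (\<lambda>x. x i))"
    using distr_PiM_component[of I "\<lambda>_. \<mu>"] assms(1) by (simp cong: PiM_cong)
  finally show ?thesis
    by (subst P.indep_vars_iff_distr_eq_PiM'[OF assms(2)]) auto
qed

lemma borel_measurable_PiM_sum_coordinates:
  fixes f :: "'a \<Rightarrow> 'b::{second_countable_topology, topological_comm_monoid_add}"
  assumes "f \<in> borel_measurable \<mu>"
  shows "(\<lambda>x. \<Sum>j<n. f (x j)) \<in> borel_measurable (PiM {..<n} (\<lambda>_. \<mu>))"
proof (intro borel_measurable_sum)
  fix j assume "j \<in> {..<n}"
  then have "(\<lambda>x. x j) \<in> measurable (PiM {..<n} (\<lambda>_. \<mu>)) \<mu>"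
    by simp
  then show "(\<lambda>x. f (x j)) \<in> borel_measurable (PiM {..<n} (\<lambda>_. \<mu>))"
    using assms by (rule measurable_compose)
qed

lemma hoeffding_PiM_mean:
  fixes f :: "'a \<Rightarrow> real"
  assumes "prob_space \<mu>" "f \<in> borel_measurable \<mu>" "AE x in \<mu>. f x \<in> {a..b}" "a < b" "0 < n" "0 \<le> t"
  defines "P \<equiv> PiM {..<n} (\<lambda>_. \<mu>)"
  shows "measure P {x \<in> space P. t \<le> \<bar>(\<Sum>j<n. f (x j)) / real n - integral\<^sup>L \<mu> f\<bar>}
    \<le> 2 * exp (- 2 * real n * t\<^sup>2 / (b - a)\<^sup>2)"
proof -
  interpret P: prob_space P
    unfolding P_def by (intro prob_space_PiM assms(1))
  have coord: "(\<lambda>x. x i) \<in> measurable P \<mu>" "distr P \<mu> (\<lambda>x. x i) = \<mu>" if "i < n" for i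
    using that distr_PiM_component[of "{..<n}" "\<lambda>_. \<mu>" i] assms(1) by (simp_all add: P_def)
  have same_distr: "distr P borel (\<lambda>x. f (x i)) = distr \<mu> borel f" if "i < n" for i
  proof -
    have "distr P borel (\<lambda>x. f (x i)) = distr (distr P \<mu> (\<lambda>x. x i)) borel f"
      using coord(1)[OF that] assms(2) by (subst distr_distr) (auto simp: o_def)
    then show ?thesis
      using coord(2)[OF that] by simp
  qed
  interpret H: Hoeffding_ineq_iid P "{..<n}" "\<lambda>i x. f (x i)" "\<lambda>x. f (x 0)" a b "integral\<^sup>L \<mu> f"
  proof unfold_locales
    have "P.indep_vars (\<lambda>_. \<mu>) (\<lambda>i x. x i) {..<n}"
      using indep_vars_PiM_coordinates[OF assms(1), of "{..<n}"] assms(5) by (auto simp: P_def)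
    then show "P.indep_vars (\<lambda>_. borel) (\<lambda>i x. f (x i)) {..<n}"
      using P.indep_vars_compose2[of "\<lambda>_. \<mu>" "\<lambda>i x. x i" "{..<n}" "\<lambda>i. f"] assms(2) by auto
    show "distr P borel (\<lambda>x. f (x i)) = distr P borel (\<lambda>x. f (x 0))" if "i \<in> {..<n}" for i
      using same_distr that assms(5) by simp
    show "(\<lambda>x. f (x 0)) \<in> borel_measurable P"
      using measurable_compose[OF coord(1) assms(2)] assms(5) by simp
    show "AE x in P. f (x 0) \<in> {a..b}"
      unfolding P_def using assms(1,3,5) by (intro AE_PiM_component) auto
    have "integral\<^sup>L P (\<lambda>x. f (x 0)) = integral\<^sup>L (distr P \<mu> (\<lambda>x. x 0)) f"
      using coord(1)[OF assms(5)] assms(2) by (subst integral_distr) auto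
    then show "integral\<^sup>L \<mu> f \<equiv> integral\<^sup>L P (\<lambda>x. f (x 0))"
      using coord(2)[OF assms(5)] by simp
  qed simp
  show ?thesis
    using H.Hoeffding_ineq_abs_ge'[of t] assms(4-6) by auto
qed

lemma hoeffding_PiM_mean_abs_bounded:
  fixes g :: "'a \<Rightarrow> real"
  assumes "prob_space \<mu>" "g \<in> borel_measurable \<mu>" "AE x in \<mu>. \<bar>g x\<bar> \<le> M" "0 < M" "0 < n" "0 \<le> t"
  defines "P \<equiv> PiM {..<n} (\<lambda>_. \<mu>)"
  shows "measure P {x \<in> space P. t \<le> \<bar>(\<Sum>j<n. g (x j)) / real n - integral\<^sup>L \<mu> g\<bar>}
    \<le> 2 * exp (- real n * t\<^sup>2 / (2 * M\<^sup>2))"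
proof -
  have "AE x in \<mu>. g x \<in> {-M..M}"
    using assms(3) by eventually_elim auto
  then have "measure P {x \<in> space P. t \<le> \<bar>(\<Sum>j<n. g (x j)) / real n - integral\<^sup>L \<mu> g\<bar>}
      \<le> 2 * exp (- 2 * real n * t\<^sup>2 / (M - - M)\<^sup>2)"
    unfolding P_def using assms by (intro hoeffding_PiM_mean) auto
  also have "- 2 * real n * t\<^sup>2 / (M - - M)\<^sup>2 = - real n * t\<^sup>2 / (2 * M\<^sup>2)"
    by (simp add: power2_eq_square field_simps)
  finally show ?thesis .
qed

lemma hoeffding_PiM_mean_complex:
  fixes f :: "'a \<Rightarrow> complex"
  assumes "prob_space \<mu>" "f \<in> borel_measurable \<mu>" "AE x in \<mu>. norm (f x) \<le> M" "0 < M" "0 < n" "0 \<le> t"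
  defines "P \<equiv> PiM {..<n} (\<lambda>_. \<mu>)"
  shows "measure P {x \<in> space P. 2 * t \<le> norm ((\<Sum>j<n. f (x j)) / of_nat n - integral\<^sup>L \<mu> f)}
    \<le> 4 * exp (- real n * t\<^sup>2 / (2 * M\<^sup>2))"
proof -
  interpret P: prob_space P
    unfolding P_def by (intro prob_space_PiM assms(1))
  interpret M: prob_space \<mu>
    by (rule assms(1))
  have "integrable \<mu> f"
    using assms(3,2) by (rule M.integrable_const_bound)
  note integral_Re[OF this, simp] integral_Im[OF this, simp]
  define dev where "dev g = {x \<in> space P. t \<le> \<bar>(\<Sum>j<n. g (x j)) / real n - integral\<^sup>L \<mu> g\<bar>}"
    for g :: "'a \<Rightarrow> real"
  have Re_meas: "(\<lambda>x. Re (f x)) \<in> borel_measurable \<mu>"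
    and Im_meas: "(\<lambda>x. Im (f x)) \<in> borel_measurable \<mu>"
    using assms(2) by measurable
  have dev_sets: "dev g \<in> P.events" if "g \<in> borel_measurable \<mu>" for g
    using borel_measurable_PiM_sum_coordinates[OF that, of n] unfolding dev_def P_def by measurable
  have "{x \<in> space P. 2 * t \<le> norm ((\<Sum>j<n. f (x j)) / of_nat n - integral\<^sup>L \<mu> f)}
      \<subseteq> dev (\<lambda>x. Re (f x)) \<union> dev (\<lambda>x. Im (f x))"
  proof (intro subsetI)
    fix x assume "x \<in> {x \<in> space P. 2 * t \<le> norm ((\<Sum>j<n. f (x j)) / of_nat n - integral\<^sup>L \<mu> f)}"
    then show "x \<in> dev (\<lambda>x. Re (f x)) \<union> dev (\<lambda>x. Im (f x))"
      using cmod_le[of "(\<Sum>j<n. f (x j)) / of_nat n - integral\<^sup>L \<mu> f"]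
      by (auto simp: dev_def)
  qed
  then have "P.prob {x \<in> space P. 2 * t \<le> norm ((\<Sum>j<n. f (x j)) / of_nat n - integral\<^sup>L \<mu> f)}
      \<le> P.prob (dev (\<lambda>x. Re (f x)) \<union> dev (\<lambda>x. Im (f x)))"
    using Re_meas Im_meas by (intro P.finite_measure_mono) (auto intro: dev_sets)
  also have "\<dots> \<le> P.prob (dev (\<lambda>x. Re (f x))) + P.prob (dev (\<lambda>x. Im (f x)))"
    by (intro measure_Un_le dev_sets Re_meas Im_meas)
  also have "\<dots> \<le> 4 * exp (- real n * t\<^sup>2 / (2 * M\<^sup>2))"
  proof -
    have "AE x in \<mu>. \<bar>Re (f x)\<bar> \<le> M"
      using assms(3) by eventually_elim (meson abs_Re_le_cmod order_trans)
    then have "P.prob (dev (\<lambda>x. Re (f x))) \<le> 2 * exp (- real n * t\<^sup>2 / (2 * M\<^sup>2))"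
      unfolding dev_def P_def by (rule hoeffding_PiM_mean_abs_bounded[OF assms(1) Re_meas _ assms(4-6)])
    moreover have "AE x in \<mu>. \<bar>Im (f x)\<bar> \<le> M"
      using assms(3) by eventually_elim (meson abs_Im_le_cmod order_trans)
    then have "P.prob (dev (\<lambda>x. Im (f x))) \<le> 2 * exp (- real n * t\<^sup>2 / (2 * M\<^sup>2))"
      unfolding dev_def P_def by (rule hoeffding_PiM_mean_abs_bounded[OF assms(1) Im_meas _ assms(4-6)])
    ultimately show ?thesis
      by simp
  qed
  finally show ?thesis .
qed

lemma (in prob_space) prob_Int_avoid_finite_union_ge:
  assumes "finite F" "\<And>y. y \<in> F \<Longrightarrow> B y \<in> events" "\<And>y. y \<in> F \<Longrightarrow> prob (B y) \<le> p"
    and "S \<in> events" "AE x in M. x \<in> S"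
  shows "1 - real (card F) * p \<le> prob (S \<inter> (space M - (\<Union>y\<in>F. B y)))"
proof -
  have "prob (\<Union>y\<in>F. B y) \<le> (\<Sum>y\<in>F. prob (B y))"
    using assms(1,2) by (intro measure_UNION_le) auto
  also have "\<dots> \<le> real (card F) * p"
    using sum_mono[of F "\<lambda>y. prob (B y)" "\<lambda>_. p"] assms(3) by simp
  finally have "1 - real (card F) * p \<le> prob (space M - (\<Union>y\<in>F. B y))"
    using assms(1,2) by (subst prob_compl) auto
  also have "\<dots> = prob (S \<inter> (space M - (\<Union>y\<in>F. B y)))"
    using assms by (intro measure_eq_AE) auto
  finally show ?thesis .
qed

lemma AE_PiM_all_coordinates:
  fixes n :: nat
  assumes "prob_space \<mu>" "AE x in \<mu>. Q x"
  shows "AE x in PiM {..<n} (\<lambda>_. \<mu>). \<forall>j<n. Q (x j)"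
proof -
  have "AE x in PiM {..<n} (\<lambda>_. \<mu>). \<forall>j\<in>{..<n}. Q (x j)"
    using assms by (intro AE_finite_allI AE_PiM_component) auto
  then show ?thesis
    by eventually_elim auto
qed

lemma prob_empirical_cauchy_transform_close:
  fixes \<mu> :: "complex measure"
  assumes "prob_space \<mu>" "sets \<mu> = sets borel" "finite F" "0 < e"
    and F: "\<And>y. y \<in> F \<Longrightarrow> e \<le> infdist y (msupp \<mu>)" and "0 \<le> t" "0 < n"
  defines "P \<equiv> PiM {..<n} (\<lambda>_. \<mu>)"
  defines "A \<equiv> {x \<in> space P. (\<forall>j<n. x j \<in> msupp \<mu>) \<and>
    (\<forall>y\<in>F. dist (empirical_cauchy_transform n x y) (cauchy_transform \<mu> y) < 2 * t)}"
  shows "A \<in> sets P" "1 - 4 * real (card F) * exp (- real n * t\<^sup>2 * e\<^sup>2 / 2) \<le> measure P A"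
proof -
  interpret P: prob_space P
    unfolding P_def by (intro prob_space_PiM assms(1))
  define bad where "bad y = {x \<in> space P. 2 * t \<le> dist (empirical_cauchy_transform n x y) (cauchy_transform \<mu> y)}"
    for y
  define supp_sample where "supp_sample = {x \<in> space P. \<forall>j<n. x j \<in> msupp \<mu>}"
  have bad_eq: "bad y = {x \<in> space P. 2 * t \<le> norm ((\<Sum>j<n. 1 / (y - x j)) / of_nat n
      - integral\<^sup>L \<mu> (\<lambda>x. 1 / (y - x)))}" for y
    by (simp add: bad_def empirical_cauchy_transform_def cauchy_transform_def dist_norm)
  have bad_sets: "bad y \<in> P.events" for y
    using borel_measurable_PiM_sum_coordinates[OF borel_measurable_cauchy_kernel[OF assms(2)], of y n]
    unfolding bad_eq P_def by measurable
  have bad_prob: "P.prob (bad y) \<le> 4 * exp (- real n * t\<^sup>2 * e\<^sup>2 / 2)" if "y \<in> F" for y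
  proof -
    have "P.prob (bad y) \<le> 4 * exp (- real n * t\<^sup>2 / (2 * (1 / e)\<^sup>2))"
      unfolding bad_eq P_def using assms(1,2,4,6,7) AE_norm_cauchy_kernel_le[OF assms(2,4) F[OF that]]
      by (intro hoeffding_PiM_mean_complex borel_measurable_cauchy_kernel) auto
    then show ?thesis
      by (simp add: power_divide)
  qed
  have supp_sets: "supp_sample \<in> P.events"
  proof -
    have "msupp \<mu> \<in> sets \<mu>"
      using closed_msupp[OF assms(2)] assms(2) by simp
    then show ?thesis
      unfolding supp_sample_def P_def by measurable
  qed
  have supp_AE: "AE x in P. x \<in> supp_sample"
    using AE_PiM_all_coordinates[OF assms(1) AE_in_msupp[OF assms(2)], of n] AE_space
    unfolding P_def supp_sample_def by eventually_elim simp
  have A_eq: "A = supp_sample \<inter> (space P - (\<Union>y\<in>F. bad y))"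
    by (auto simp: A_def supp_sample_def bad_def not_le)
  show "A \<in> P.events"
    unfolding A_eq using supp_sets bad_sets assms(3) by auto
  show "1 - 4 * real (card F) * exp (- real n * t\<^sup>2 * e\<^sup>2 / 2) \<le> P.prob A"
    using P.prob_Int_avoid_finite_union_ge[where B = bad, OF assms(3) bad_sets bad_prob supp_sets supp_AE]
    unfolding A_eq by (simp add: mult.assoc)
qed

lemma cauchy_transform_net:
  fixes \<mu> :: "complex measure"
  assumes "prob_space \<mu>" "sets \<mu> = sets borel" "0 < e"
  obtains \<delta> F where "0 < \<delta>" "finite F" "\<And>y. y \<in> F \<Longrightarrow> e \<le> infdist y (msupp \<mu>)"
    "\<And>z. norm z \<le> B \<Longrightarrow> e \<le> infdist z (msupp \<mu> \<union> zeros_CT \<mu>) \<Longrightarrow>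
      \<delta> \<le> norm (cauchy_transform \<mu> z) \<and> (\<exists>y\<in>F. dist y z < \<delta> * e\<^sup>2 / 4)"
proof -
  define K where "K = cball 0 B \<inter> {z. e \<le> infdist z (msupp \<mu> \<union> zeros_CT \<mu>)}"
  have "compact K"
    unfolding K_def by (intro compact_Int_closed compact_cball closed_Collect_le continuous_intros)
  moreover have K_far: "e \<le> infdist z (msupp \<mu> \<union> zeros_CT \<mu>)" if "z \<in> K" for z
    using that by (simp add: K_def)
  ultimately obtain \<delta> where \<delta>: "0 < \<delta>" "\<And>z. z \<in> K \<Longrightarrow> \<delta> \<le> norm (cauchy_transform \<mu> z)"
    using cauchy_transform_bounded_below[OF assms(1,2) _ assms(3)] by blast
  obtain F where F: "finite F" "F \<subseteq> K" "K \<subseteq> (\<Union>y\<in>F. ball y (\<delta> * e\<^sup>2 / 4))"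
    using compactE_image[OF \<open>compact K\<close>, of K "\<lambda>y. ball y (\<delta> * e\<^sup>2 / 4)"] \<delta>(1) assms(3) by force
  have "e \<le> infdist y (msupp \<mu>)" if "y \<in> F" for y
    using order_trans[OF K_far infdist_msupp_Un_zeros_le[OF assms(1,2)]] F(2) that by blast
  moreover have "\<delta> \<le> norm (cauchy_transform \<mu> z) \<and> (\<exists>y\<in>F. dist y z < \<delta> * e\<^sup>2 / 4)"
    if "norm z \<le> B" "e \<le> infdist z (msupp \<mu> \<union> zeros_CT \<mu>)" for z
  proof -
    have "z \<in> K"
      using that by (simp add: K_def)
    then show ?thesis
      using \<delta>(2) F(3) by (force simp: dist_commute)
  qed
  ultimately show ?thesis
    using that \<delta>(1) F(1) by blast
qed

lemma critical_point_in_nbhd_N: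
  fixes \<mu> :: "complex measure"
  assumes "prob_space \<mu>" "sets \<mu> = sets borel" "0 < e" "0 < n"
    and sample: "\<And>j. j < n \<Longrightarrow> x j \<in> msupp \<mu>"
    and bounded: "\<And>w. w \<in> msupp \<mu> \<Longrightarrow> norm w \<le> B"
    and F_far: "\<And>y. y \<in> F \<Longrightarrow> e \<le> infdist y (msupp \<mu>)"
    and net: "\<And>z. norm z \<le> B \<Longrightarrow> e \<le> infdist z (msupp \<mu> \<union> zeros_CT \<mu>) \<Longrightarrow>
      \<delta> \<le> norm (cauchy_transform \<mu> z) \<and> (\<exists>y\<in>F. dist y z < \<delta> * e\<^sup>2 / 4)"
    and close: "\<And>y. y \<in> F \<Longrightarrow> dist (empirical_cauchy_transform n x y) (cauchy_transform \<mu> y) < \<delta> / 4"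
    and critical: "poly (pderiv (rand_poly n x)) z = 0"
  shows "z \<in> nbhd_N \<mu> e"
proof (rule ccontr)
  assume "z \<notin> nbhd_N \<mu> e"
  then have far: "e \<le> infdist z (msupp \<mu> \<union> zeros_CT \<mu>)"
    by (simp add: nbhd_N_def)
  show False
  proof (cases "norm z \<le> B")
    case True
    have z_supp: "e \<le> infdist z (msupp \<mu>)"
      using far infdist_msupp_Un_zeros_le[OF assms(1,2)] by (rule order_trans)
    obtain y where y: "y \<in> F" "dist y z < \<delta> * e\<^sup>2 / 4" and \<delta>: "\<delta> \<le> norm (cauchy_transform \<mu> z)"
      using net[OF True far] by blast
    have "2 * dist y z / e\<^sup>2 < \<delta> / 2"
      using y(2) assms(3) by (simp add: field_simps)
    with close[OF y(1)] have closeness: "dist (empirical_cauchy_transform n x y) (cauchy_transform \<mu> y)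
        + 2 * dist y z / e\<^sup>2 < norm (cauchy_transform \<mu> z)"
      using \<delta> zero_le_dist[of "empirical_cauchy_transform n x y" "cauchy_transform \<mu> y"] by linarith
    have "empirical_cauchy_transform n x z \<noteq> 0"
      using sample closeness
      by (rule empirical_cauchy_transform_ne_0_near[where n = n and x = x, OF assms(1-3) z_supp F_far[OF y(1)]])
    moreover have "z \<noteq> x j" if "j < n" for j
      using z_supp assms(3) infdist_le[OF sample[OF that], of z] by auto
    ultimately show False
      using empirical_cauchy_transform_eq_0_if_critical[OF critical] by blast
  next
    case False
    then have "norm (x j) < norm z" if "j < n" for j
      using bounded[OF sample[OF that]] by simp
    then show False
      using empirical_cauchy_transform_ne_0_outside[OF assms(4)]
        empirical_cauchy_transform_eq_0_if_critical[OF critical] by fastforce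
  qed
qed

lemma prob_critical_points_in_nbhd_N:
  fixes \<mu> :: "complex measure"
  assumes "prob_space \<mu>" "sets \<mu> = sets borel" "0 < e" "0 < \<delta>" "finite F" "1 \<le> n"
    and bounded: "\<And>w. w \<in> msupp \<mu> \<Longrightarrow> norm w \<le> B"
    and F_far: "\<And>y. y \<in> F \<Longrightarrow> e \<le> infdist y (msupp \<mu>)"
    and net: "\<And>z. norm z \<le> B \<Longrightarrow> e \<le> infdist z (msupp \<mu> \<union> zeros_CT \<mu>) \<Longrightarrow>
      \<delta> \<le> norm (cauchy_transform \<mu> z) \<and> (\<exists>y\<in>F. dist y z < \<delta> * e\<^sup>2 / 4)"
  shows "\<exists>A \<in> sets (PiM {..<n} (\<lambda>_. \<mu>)).
    A \<subseteq> {x. \<forall>z. poly (pderiv (rand_poly n x)) z = 0 \<longrightarrow> z \<in> nbhd_N \<mu> e} \<and>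
    1 - 4 * real (card F) * exp (- real n * (\<delta> / 8)\<^sup>2 * e\<^sup>2 / 2) \<le> measure (PiM {..<n} (\<lambda>_. \<mu>)) A"
proof -
  define A where "A = {x \<in> space (PiM {..<n} (\<lambda>_. \<mu>)). (\<forall>j<n. x j \<in> msupp \<mu>) \<and>
    (\<forall>y\<in>F. dist (empirical_cauchy_transform n x y) (cauchy_transform \<mu> y) < 2 * (\<delta> / 8))}"
  have subset: "A \<subseteq> {x. \<forall>z. poly (pderiv (rand_poly n x)) z = 0 \<longrightarrow> z \<in> nbhd_N \<mu> e}"
  proof (intro subsetI CollectI allI impI)
    fix x z assume "x \<in> A" "poly (pderiv (rand_poly n x)) z = 0"
    then show "z \<in> nbhd_N \<mu> e"
      using assms(6) by (intro critical_point_in_nbhd_N[where n = n and x = x, OF assms(1-3) _ _ bounded F_far net])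
        (auto simp: A_def)
  qed
  have "0 \<le> \<delta> / 8" "0 < n"
    using assms(4,6) by simp_all
  note close = prob_empirical_cauchy_transform_close[OF assms(1,2,5,3) F_far this, folded A_def]
  show ?thesis
  proof (rule bexI[of _ A])
    show "A \<in> sets (PiM {..<n} (\<lambda>_. \<mu>))"
      by (rule close(1))
    show "A \<subseteq> {x. \<forall>z. poly (pderiv (rand_poly n x)) z = 0 \<longrightarrow> z \<in> nbhd_N \<mu> e} \<and>
      1 - 4 * real (card F) * exp (- real n * (\<delta> / 8)\<^sup>2 * e\<^sup>2 / 2) \<le> measure (PiM {..<n} (\<lambda>_. \<mu>)) A"
      using subset close(2) by (rule conjI)
  qed
qed

theorem mainTheorem2:
  fixes \<mu> :: "complex measure"
  assumes "prob_space \<mu>" and "sets \<mu> = sets borel" and "compact (msupp \<mu>)"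
  shows "\<forall>\<epsilon>>0. \<exists>C>0. \<exists>c>0. \<forall>n\<ge>1.
     \<exists>A \<in> sets (PiM {..<n} (\<lambda>_. \<mu>)).
        A \<subseteq> {x. \<forall>z. poly (pderiv (rand_poly n x)) z = 0 \<longrightarrow> z \<in> nbhd_N \<mu> \<epsilon>} \<and>
        measure (PiM {..<n} (\<lambda>_. \<mu>)) A \<ge> 1 - C * exp (- c * real n)"
proof (intro allI impI)
  fix \<epsilon> :: real assume "0 < \<epsilon>"
  obtain B where B: "\<And>w. w \<in> msupp \<mu> \<Longrightarrow> norm w \<le> B"
    using compact_imp_bounded[OF assms(3)] bounded_iff by metis
  obtain \<delta> F where \<delta>: "0 < \<delta>" and F: "finite F" "\<And>y. y \<in> F \<Longrightarrow> \<epsilon> \<le> infdist y (msupp \<mu>)"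
    and net: "\<And>z. norm z \<le> B \<Longrightarrow> \<epsilon> \<le> infdist z (msupp \<mu> \<union> zeros_CT \<mu>) \<Longrightarrow>
      \<delta> \<le> norm (cauchy_transform \<mu> z) \<and> (\<exists>y\<in>F. dist y z < \<delta> * \<epsilon>\<^sup>2 / 4)"
    using cauchy_transform_net[OF assms(1,2) \<open>0 < \<epsilon>\<close>] by metis
  define C where "C = 4 * real (card F) + 1" \<comment> \<open>the \<open>+ 1\<close> keeps \<open>C\<close> positive when the net is empty\<close>
  define c where "c = (\<delta> / 8)\<^sup>2 * \<epsilon>\<^sup>2 / 2"
  have "\<exists>A \<in> sets (PiM {..<n} (\<lambda>_. \<mu>)).
      A \<subseteq> {x. \<forall>z. poly (pderiv (rand_poly n x)) z = 0 \<longrightarrow> z \<in> nbhd_N \<mu> \<epsilon>} \<and>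
      measure (PiM {..<n} (\<lambda>_. \<mu>)) A \<ge> 1 - C * exp (- c * real n)" if "1 \<le> n" for n
  proof -
    have "1 - C * exp (- c * real n) \<le> 1 - 4 * real (card F) * exp (- real n * (\<delta> / 8)\<^sup>2 * \<epsilon>\<^sup>2 / 2)"
      by (simp add: C_def c_def algebra_simps)
    then show ?thesis
      using prob_critical_points_in_nbhd_N[OF assms(1,2) \<open>0 < \<epsilon>\<close> \<delta> F(1) that B F(2) net]
      by (meson order_trans)
  qed
  moreover have "0 < C" "0 < c"
    using \<delta> \<open>0 < \<epsilon>\<close> by (simp_all add: C_def c_def)
  ultimately show "\<exists>C>0. \<exists>c>0. \<forall>n\<ge>1. \<exists>A \<in> sets (PiM {..<n} (\<lambda>_. \<mu>)).
      A \<subseteq> {x. \<forall>z. poly (pderiv (rand_poly n x)) z = 0 \<longrightarrow> z \<in> nbhd_N \<mu> \<epsilon>} \<and>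
      measure (PiM {..<n} (\<lambda>_. \<mu>)) A \<ge> 1 - C * exp (- c * real n)"
    by blast
qed

end
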